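(* For every integer $n\geq 2$, $LD(P_2\square P_n)\geq \left\lceil \frac{3n-1}{4}\right\rceil$.
   Context: $P_n$ is the path on $n$ vertices and $\square$ is the Cartesian product of graphs. For a graph $G$, $C\subseteq V(G)$ and $v\in V(G)$ let $I(v)=N[v]\cap C$ ($N[v]$ the closed neighborhood). $C$ is a locating-dominating set if $I(v)\neq\emptyset$ for all $v\in V(G)\setminus C$ and $I(u)\neq I(v)$ for all distinct $u,v\in V(G)\setminus C$. $LD(G)$ is the minimum cardinality of a locating-dominating set of $G$. *)

theory Defs
  imports Complex_Main
begin

definition closed_nbhd :: "'a set \<Rightarrow> ('a \<Rightarrow> 'a \<Rightarrow> bool) \<Rightarrow> 'a \<Rightarrow> 'a set" where
  "closed_nbhd V E v = {u \<in> V. u = v \<or> E v u}"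

definition locating_dominating :: "'a set \<Rightarrow> ('a \<Rightarrow> 'a \<Rightarrow> bool) \<Rightarrow> 'a set \<Rightarrow> bool" where
  "locating_dominating V E C \<longleftrightarrow> C \<subseteq> V \<and>
     (\<forall>v \<in> V - C. closed_nbhd V E v \<inter> C \<noteq> {}) \<and>
     (\<forall>u \<in> V - C. \<forall>v \<in> V - C. u \<noteq> v \<longrightarrow> closed_nbhd V E u \<inter> C \<noteq> closed_nbhd V E v \<inter> C)"

definition LD :: "'a set \<Rightarrow> ('a \<Rightarrow> 'a \<Rightarrow> bool) \<Rightarrow> nat" where
  "LD V E = Min (card ` {C. locating_dominating V E C})"

definition path_adj :: "nat \<Rightarrow> nat \<Rightarrow> bool" where
  "path_adj i j \<longleftrightarrow> i + 1 = j \<or> j + 1 = i"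

definition grid_V :: "nat \<Rightarrow> (nat \<times> nat) set" where
  "grid_V n = {0..<2} \<times> {0..<n}"

definition grid_E :: "(nat \<times> nat) \<Rightarrow> (nat \<times> nat) \<Rightarrow> bool" where
  "grid_E p q \<longleftrightarrow> (fst p = fst q \<and> path_adj (snd p) (snd q)) \<or>
                   (snd p = snd q \<and> path_adj (fst p) (fst q))"

end

theory Submission
  imports Defs
begin

text \<open>Read a locating-dominating set \<open>C\<close> of the ladder column by column and give column \<open>j\<close>
the weight \<open>4 |C \<inter> column j| - 3\<close>, so that the claim is that the total weight is at least
\<open>-1\<close>. Domination and the separation of vertices at distance at most two constrain every
window of five consecutive columns. The weight of the columns to the left of a column is bounded
from below by a potential that depends only on that column, its left neighbour and its next two
right neighbours; the potential increases by at most the weight of a column when the window moves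
one step (a finite check over the admissible windows), it is at most \<open>0\<close> at the left end and at
least \<open>-1\<close> at the right end.\<close>

lemma locating_dominating_subset: "locating_dominating V E C \<Longrightarrow> C \<subseteq> V"
  by (simp add: locating_dominating_def)

lemma locating_dominating_dominates:
  assumes "locating_dominating V E C" "v \<in> V - C"
  shows "\<exists>w \<in> C. w \<in> closed_nbhd V E v"
  using assms unfolding locating_dominating_def by blast

lemma locating_dominating_separates:
  assumes "locating_dominating V E C" "u \<in> V - C" "v \<in> V - C" "u \<noteq> v"
  shows "\<exists>w \<in> C. w \<in> closed_nbhd V E u \<longleftrightarrow> w \<notin> closed_nbhd V E v"
  using assms unfolding locating_dominating_def by blast

lemma LD_lower_bound:
  assumes "finite V" "\<And>C. locating_dominating V E C \<Longrightarrow> k \<le> card C"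
  shows "k \<le> LD V E"
proof -
  have "finite {C. locating_dominating V E C}"
    using assms(1) by (rule finite_subset[rotated, OF finite_Pow_iff[THEN iffD2]])
      (auto simp: locating_dominating_def)
  moreover have "locating_dominating V E V"
    by (simp add: locating_dominating_def)
  ultimately show ?thesis
    unfolding LD_def using assms(2) by (subst Min_ge_iff) auto
qed

lemma grid_V_iff: "(r, c) \<in> grid_V n \<longleftrightarrow> r < 2 \<and> c < n"
  by (simp add: grid_V_def)

lemma closed_nbhd_grid:
  assumes "r < 2"
  shows "w \<in> closed_nbhd (grid_V n) grid_E (r, c) \<longleftrightarrow>
     w \<in> grid_V n \<and> (w = (r, c) \<or> w = (1 - r, c) \<or> (0 < c \<and> w = (r, c - 1)) \<or> w = (r, c + 1))"
  using assms by (cases w) (auto simp: closed_nbhd_def grid_E_def path_adj_def grid_V_def)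

lemma grid_dominated:
  assumes "locating_dominating (grid_V n) grid_E C" "r < 2" "c < n" "(r, c) \<notin> C"
  shows "(0 < c \<and> (r, c - 1) \<in> C) \<or> (1 - r, c) \<in> C \<or> (r, c + 1) \<in> C"
proof -
  have "(r, c) \<in> grid_V n - C"
    using assms(2-4) by (simp add: grid_V_iff)
  then obtain w where "w \<in> C" "w \<in> closed_nbhd (grid_V n) grid_E (r, c)"
    using locating_dominating_dominates[OF assms(1)] by blast
  then show ?thesis
    using assms(4) by (auto simp: closed_nbhd_grid[OF assms(2)])
qed

lemma grid_separates_diagonal:
  assumes "locating_dominating (grid_V n) grid_E C" "r < 2" "c + 1 < n"
    "(r, c) \<notin> C" "(1 - r, c + 1) \<notin> C"
  shows "(0 < c \<and> (r, c - 1) \<in> C) \<or> (1 - r, c + 2) \<in> C"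
proof -
  have "(r, c) \<in> grid_V n - C" "(1 - r, c + 1) \<in> grid_V n - C" "(r, c) \<noteq> (1 - r, c + 1)"
    using assms(2-5) by (auto simp: grid_V_iff)
  then obtain w where "w \<in> C"
    "w \<in> closed_nbhd (grid_V n) grid_E (r, c) \<longleftrightarrow> w \<notin> closed_nbhd (grid_V n) grid_E (1 - r, c + 1)"
    using locating_dominating_separates[OF assms(1)] by blast
  then show ?thesis
    using assms(2,4,5) by (auto simp: closed_nbhd_grid)
qed

lemma grid_separates_row:
  assumes "locating_dominating (grid_V n) grid_E C" "r < 2" "c + 2 < n"
    "(r, c) \<notin> C" "(r, c + 2) \<notin> C"
  shows "(0 < c \<and> (r, c - 1) \<in> C) \<or> (1 - r, c) \<in> C \<or> (1 - r, c + 2) \<in> C \<or> (r, c + 3) \<in> C"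
proof -
  have "(r, c) \<in> grid_V n - C" "(r, c + 2) \<in> grid_V n - C" "(r, c) \<noteq> (r, c + 2)"
    using assms(2-5) by (auto simp: grid_V_iff)
  then obtain w where "w \<in> C"
    "w \<in> closed_nbhd (grid_V n) grid_E (r, c) \<longleftrightarrow> w \<notin> closed_nbhd (grid_V n) grid_E (r, c + 2)"
    using locating_dominating_separates[OF assms(1)] by blast
  then show ?thesis
    using assms(2,4,5) by (auto simp: closed_nbhd_grid numeral_3_eq_3)
qed

datatype column = Outside | Col bool bool

abbreviation empty_col :: column where "empty_col \<equiv> Col False False"
abbreviation full_col :: column where "full_col \<equiv> Col True True"

fun occupied :: "column \<Rightarrow> nat \<Rightarrow> bool" where
  "occupied Outside r = False"
| "occupied (Col x y) r = (if r = 0 then x else y)"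

fun col_card :: "column \<Rightarrow> int" where
  "col_card Outside = 0"
| "col_card (Col x y) = of_bool x + of_bool y"

text \<open>The conditions on the vertex in row \<open>r\<close> of column \<open>b\<close>, whose neighbours are \<open>a\<close> and \<open>c\<close>,
if it is not in \<open>C\<close>: it is dominated, and it is separated from the vertex in the other row of
\<open>c\<close> and from the vertex in its own row of \<open>d\<close>.\<close>

definition row_window_ok :: "nat \<Rightarrow> column \<Rightarrow> column \<Rightarrow> column \<Rightarrow> column \<Rightarrow> column \<Rightarrow> bool" where
  "row_window_ok r a b c d e \<longleftrightarrow> \<not> occupied b r \<longrightarrow>
     (occupied a r \<or> occupied b (1 - r) \<or> occupied c r) \<and>
     (c \<noteq> Outside \<and> \<not> occupied c (1 - r) \<longrightarrow> occupied a r \<or> occupied d (1 - r)) \<and>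
     (d \<noteq> Outside \<and> \<not> occupied d r \<longrightarrow>
        occupied a r \<or> occupied b (1 - r) \<or> occupied d (1 - r) \<or> occupied e r)"

definition ld_window :: "column \<Rightarrow> column \<Rightarrow> column \<Rightarrow> column \<Rightarrow> column \<Rightarrow> bool" where
  "ld_window a b c d e \<longleftrightarrow> b \<noteq> Outside \<and> row_window_ok 0 a b c d e \<and> row_window_ok 1 a b c d e"

text \<open>These values were obtained by solving the difference constraints of
\<open>ladder_potential_step\<close> below; three columns do not suffice.\<close>

definition ladder_potential :: "column \<Rightarrow> column \<Rightarrow> column \<Rightarrow> column \<Rightarrow> int" where
  "ladder_potential a b c d =
     (if b = Outside then (if a = empty_col then -1 else 0)
      else if b = empty_col then (if a = full_col then (if c = empty_col then 3 else 2) else 0)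
      else if a = full_col then 0
      else if \<not> ((occupied b 0 \<or> occupied c 0) \<and> (occupied b 1 \<or> occupied c 1)) then -1
      else if a = empty_col \<and> \<not> (c = empty_col \<and> d = empty_col) then -3
      else -2)"

lemma column_values: "c \<in> {Outside, empty_col, Col False True, Col True False, full_col}"
  by (cases c) auto

lemma ladder_potential_step:
  assumes "ld_window a b c d e"
  shows "ladder_potential b c d e \<le> ladder_potential a b c d + 4 * col_card b - 3"
  using column_values[of a] column_values[of b] column_values[of c] column_values[of d]
    column_values[of e] assms
  by (elim insertE emptyE) (simp_all add: ld_window_def row_window_ok_def ladder_potential_def)

lemma ladder_potential_start: "ladder_potential Outside b c d \<le> 0"
  by (simp add: ladder_potential_def)

lemma ladder_potential_end: "-1 \<le> ladder_potential a Outside Outside Outside"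
  by (simp add: ladder_potential_def)

text \<open>\<open>ladder_column C n (Suc j)\<close> describes column \<open>j\<close>, so that index \<open>0\<close> is the missing column
to the left of column \<open>0\<close>.\<close>

fun ladder_column :: "(nat \<times> nat) set \<Rightarrow> nat \<Rightarrow> nat \<Rightarrow> column" where
  "ladder_column C n 0 = Outside"
| "ladder_column C n (Suc c) = (if c < n then Col ((0, c) \<in> C) ((1, c) \<in> C) else Outside)"

lemma occupied_ladder_column:
  assumes "C \<subseteq> grid_V n" "r < 2"
  shows "occupied (ladder_column C n k) r \<longleftrightarrow> 0 < k \<and> (r, k - 1) \<in> C"
  using assms by (cases k) (auto simp: grid_V_def less_2_cases_iff)

lemma ladder_column_eq_Outside: "ladder_column C n k = Outside \<longleftrightarrow> k = 0 \<or> n < k"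
  by (cases k) auto

lemma ld_window_ladder_column:
  assumes LD: "locating_dominating (grid_V n) grid_E C" and "c < n"
  defines "w \<equiv> ladder_column C n"
  shows "ld_window (w c) (w (c + 1)) (w (c + 2)) (w (c + 3)) (w (c + 4))"
proof -
  have sub: "C \<subseteq> grid_V n"
    using LD by (rule locating_dominating_subset)
  then have in_range: "j < n" if "(r, j) \<in> C" for r j
    using that by (auto simp: grid_V_def)
  have "row_window_ok r (w c) (w (c + 1)) (w (c + 2)) (w (c + 3)) (w (c + 4))" if "r < 2" for r
    using grid_dominated[OF LD that \<open>c < n\<close>] grid_separates_diagonal[OF LD that, of c]
      grid_separates_row[OF LD that, of c] in_range that
    unfolding less_2_cases_iff
    by (elim disjE) (auto simp: row_window_ok_def w_def occupied_ladder_column[OF sub]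
        ladder_column_eq_Outside eval_nat_numeral)
  then show ?thesis
    using \<open>c < n\<close> by (simp add: ld_window_def w_def)
qed

lemma ladder_potential_le_balance:
  assumes LD: "locating_dominating (grid_V n) grid_E C" and "m \<le> n"
  defines "w \<equiv> ladder_column C n"
  shows "ladder_potential (w m) (w (m + 1)) (w (m + 2)) (w (m + 3))
    \<le> (\<Sum>c<m. 4 * col_card (w (c + 1)) - 3)"
  using \<open>m \<le> n\<close>
proof (induction m)
  case 0
  show ?case
    using ladder_potential_start by (simp add: w_def)
next
  case (Suc m)
  then have "m < n"
    by simp
  from ladder_potential_step[OF ld_window_ladder_column[OF LD this, folded w_def]]
  have "ladder_potential (w (m + 1)) (w (m + 2)) (w (m + 3)) (w (m + 4))
      \<le> ladder_potential (w m) (w (m + 1)) (w (m + 2)) (w (m + 3)) + 4 * col_card (w (m + 1)) - 3" .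
  then show ?case
    using Suc by (simp add: eval_nat_numeral)
qed

lemma card_eq_sum_col_card:
  assumes "C \<subseteq> grid_V n"
  shows "int (card C) = (\<Sum>c<n. col_card (ladder_column C n (c + 1)))"
proof -
  have "int (card C) = (\<Sum>p \<in> grid_V n. of_bool (p \<in> C))"
    using assms by (simp add: grid_V_def Int_absorb1)
  also have "\<dots> = (\<Sum>r<2. \<Sum>c<n. of_bool ((r, c) \<in> C))"
    by (simp add: grid_V_def lessThan_atLeast0 sum.cartesian_product del: sum_of_bool_eq)
  also have "\<dots> = (\<Sum>c<n. \<Sum>r<2. of_bool ((r, c) \<in> C))"
    by (rule sum.swap)
  also have "\<dots> = (\<Sum>c<n. col_card (ladder_column C n (c + 1)))"
    by (simp add: numeral_2_eq_2 del: sum_of_bool_eq)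
  finally show ?thesis .
qed

lemma locating_dominating_ladder_card:
  assumes LD: "locating_dominating (grid_V n) grid_E C"
  shows "3 * int n - 1 \<le> 4 * int (card C)"
proof -
  let ?w = "ladder_column C n"
  have "-1 \<le> ladder_potential (?w n) (?w (n + 1)) (?w (n + 2)) (?w (n + 3))"
    using ladder_potential_end by (simp add: eval_nat_numeral)
  also have "\<dots> \<le> (\<Sum>c<n. 4 * col_card (?w (c + 1)) - 3)"
    using ladder_potential_le_balance[OF LD order_refl] .
  also have "\<dots> = 4 * int (card C) - 3 * int n"
    using card_eq_sum_col_card[OF locating_dominating_subset[OF LD]]
    by (simp add: sum_subtractf sum_distrib_left)
  finally show ?thesis
    by linarith
qed

theorem lemma4p6:
  fixes n :: nat
  assumes "n \<ge> 2"
  shows "LD (grid_V n) grid_E \<ge> nat \<lceil>(3 * real n - 1) / 4\<rceil>"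
proof (rule LD_lower_bound)
  show "finite (grid_V n)"
    by (simp add: grid_V_def)
next
  fix C
  assume "locating_dominating (grid_V n) grid_E C"
  from locating_dominating_ladder_card[OF this]
  have "3 * real n - 1 \<le> 4 * real (card C)"
    by linarith
  then show "nat \<lceil>(3 * real n - 1) / 4\<rceil> \<le> card C"
    by (simp add: nat_le_iff ceiling_le_iff)
qed

end
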